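(* Let $n\le l$ be positive integers, let $L_l=\{a_1<\dots<a_l\}$ be the linearly ordered semilattice of $l$ elements, and let $t(X)=s(X)$ be an equation over $L_l$ in the variables $X=\{x_1,\dots,x_n\}$ in which every variable occurs. Let $Y=V(t(X)=s(X))\subseteq L_l^n$ be its solution set. Then $Y=\bigcup_{\sigma} Y_\sigma$, where the union is over all permutations $\sigma$ of $\{1,\dots,n\}$ of the first or second kind with respect to $t(X)=s(X)$.
   Context: $L_l$ has multiplication $a_ia_j=a_{\min(i,j)}$. A term is a commutative word in $x_1,\dots,x_n$; $\mathrm{Var}(t)$ is the set of variables occurring in $t$. An equation is an ordered pair of terms $t(X)=s(X)$; $P\in L_l^n$ is a solution if $t(P)=s(P)$; $x\le y$ abbreviates $xy=x$. For a system $S$, $V(S)$ is its set of common solutions. A permutation $\sigma$ of $\{1,\dots,n\}$ is of the first kind if $x_{\sigma(1)}\in\mathrm{Var}(t)\cap\mathrm{Var}(s)$, and of the second kind if $x_{\sigma(1)}\in\mathrm{Var}(s)\setminus\mathrm{Var}(t)$ and $x_{\sigma(2)}\in\mathrm{Var}(t)\setminus\mathrm{Var}(s)$. For $\sigma$ of the first kind, $Y_\sigma=V(\{x_{\sigma(i)}\le x_{\sigma(i+1)}:1\le i\le n-1\})$; for $\sigma$ of the second kind, $Y_\sigma=V(\{x_{\sigma(1)}=x_{\sigma(2)}\}\cup\{x_{\sigma(i)}\le x_{\sigma(i+1)}:2\le i\le n-1\})$. *)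

theory Defs
  imports "HOL-Library.Multiset" "HOL-Library.FuncSet" "HOL-Combinatorics.Permutations"
begin

text \<open>The chain semilattice L_l is modelled as {1..l} :: nat set, the element a_i being i;
  the product a_i a_j = a_{min(i,j)} is min. Variables x_1..x_n are indices 1..n.
  A term (commutative word) is a nonempty multiset of variable indices.\<close>

type_synonym sl_term = "nat multiset"
type_synonym sl_eq = "sl_term \<times> sl_term"

definition Var :: "sl_term \<Rightarrow> nat set" where
  "Var t = set_mset t"

text \<open>Value of a word at a point: the product of the values of its letters, i.e. (as the
  product is min, which is commutative, associative, idempotent) the minimum of their values.\<close>
definition eval_term :: "sl_term \<Rightarrow> (nat \<Rightarrow> nat) \<Rightarrow> nat" where
  "eval_term t P = Min (P ` set_mset t)"

definition points :: "nat \<Rightarrow> nat \<Rightarrow> (nat \<Rightarrow> nat) set" where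
  "points l n = PiE {1..n} (\<lambda>_. {1..l})"

definition V :: "nat \<Rightarrow> nat \<Rightarrow> sl_eq set \<Rightarrow> (nat \<Rightarrow> nat) set" where
  "V l n S = {P \<in> points l n. \<forall>(t, s) \<in> S. eval_term t P = eval_term s P}"

text \<open>x \<le> y abbreviates the equation x y = x; x = y is the equation between the one-letter words.\<close>
definition leq_eq :: "nat \<Rightarrow> nat \<Rightarrow> sl_eq" where
  "leq_eq x y = ({#x, y#}, {#x#})"

definition var_eq :: "nat \<Rightarrow> nat \<Rightarrow> sl_eq" where
  "var_eq x y = ({#x#}, {#y#})"

definition first_kind :: "nat \<Rightarrow> sl_term \<Rightarrow> sl_term \<Rightarrow> (nat \<Rightarrow> nat) \<Rightarrow> bool" where
  "first_kind n t s \<sigma> \<longleftrightarrow> \<sigma> permutes {1..n} \<and> \<sigma> 1 \<in> Var t \<inter> Var s"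

definition second_kind :: "nat \<Rightarrow> sl_term \<Rightarrow> sl_term \<Rightarrow> (nat \<Rightarrow> nat) \<Rightarrow> bool" where
  "second_kind n t s \<sigma> \<longleftrightarrow> \<sigma> permutes {1..n} \<and> \<sigma> 1 \<in> Var s - Var t \<and> \<sigma> 2 \<in> Var t - Var s"

definition Y_first :: "nat \<Rightarrow> nat \<Rightarrow> (nat \<Rightarrow> nat) \<Rightarrow> (nat \<Rightarrow> nat) set" where
  "Y_first l n \<sigma> = V l n {leq_eq (\<sigma> i) (\<sigma> (i + 1)) | i. 1 \<le> i \<and> i \<le> n - 1}"

definition Y_second :: "nat \<Rightarrow> nat \<Rightarrow> (nat \<Rightarrow> nat) \<Rightarrow> (nat \<Rightarrow> nat) set" where
  "Y_second l n \<sigma> = V l n ({var_eq (\<sigma> 1) (\<sigma> 2)} \<union>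
                              {leq_eq (\<sigma> i) (\<sigma> (i + 1)) | i. 2 \<le> i \<and> i \<le> n - 1})"

end

theory Submission
  imports Defs
begin

text \<open>Since every variable occurs, the least value \<open>m\<close> of a point \<open>P\<close> is \<open>min (t(P), s(P))\<close>,
  so \<open>P\<close> solves \<open>t = s\<close> iff \<open>m\<close> is attained at a variable of \<open>t\<close> and at a variable of \<open>s\<close>.
  Listing the variables by increasing value, starting with such a variable common to \<open>t\<close> and
  \<open>s\<close>, or else with one of \<open>s\<close> followed by one of \<open>t\<close>, yields a permutation of the first or
  second kind whose \<open>Y\<^sub>\<sigma>\<close> contains \<open>P\<close>. Conversely, on \<open>Y\<^sub>\<sigma>\<close> the first variable(s) in the
  order \<open>\<sigma>\<close> take the least value.\<close>


lemma permutes_nth_shift: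
  assumes "distinct ys" and "set ys = {1..n}"
  shows "(\<lambda>i. if i \<in> {1..n} then ys ! (i - 1) else i) permutes {1..n}"
proof (rule bij_imp_permutes)
  have len: "length ys = n"
    using distinct_card[OF assms(1)] assms(2) by simp
  have "bij_betw (\<lambda>i. i - 1) {1..n} {..<n}"
    by (rule bij_betw_byWitness[where f' = Suc]) auto
  then have "bij_betw ((!) ys \<circ> (\<lambda>i. i - 1)) {1..n} {1..n}"
    using bij_betw_nth[OF assms(1) refl assms(2)[symmetric]] len by (auto intro: bij_betw_trans)
  then show "bij_betw (\<lambda>i. if i \<in> {1..n} then ys ! (i - 1) else i) {1..n} {1..n}"
    by (rule bij_betw_cong[THEN iffD1, rotated]) simp
qed auto

lemma exists_sorting_permutation:
  fixes f :: "nat \<Rightarrow> 'a::linorder"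
  assumes "distinct ps" and "set ps \<subseteq> {1..n}"
    and least: "\<And>p x. p \<in> set ps \<Longrightarrow> x \<in> {1..n} \<Longrightarrow> f p \<le> f x"
    and const: "\<And>p q. p \<in> set ps \<Longrightarrow> q \<in> set ps \<Longrightarrow> f p = f q"
  obtains \<sigma> where "\<sigma> permutes {1..n}" and "\<And>k. k < length ps \<Longrightarrow> \<sigma> (Suc k) = ps ! k"
    and "\<And>i j. 1 \<le> i \<Longrightarrow> i \<le> j \<Longrightarrow> j \<le> n \<Longrightarrow> f (\<sigma> i) \<le> f (\<sigma> j)"
proof -
  define ys where "ys = ps @ sort_key f (filter (\<lambda>x. x \<notin> set ps) [1..<Suc n])"
  define \<sigma> where "\<sigma> i = (if i \<in> {1..n} then ys ! (i - 1) else i)" for i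
  have "distinct ys" and "set ys = {1..n}"
    using assms(1,2) by (auto simp: ys_def)
  then have perm: "\<sigma> permutes {1..n}" and len: "length ys = n"
    using permutes_nth_shift distinct_card[of ys] unfolding \<sigma>_def by auto
  have "sorted (map f ps)"
    using const by (auto simp: sorted_iff_nth_mono intro!: eq_refl)
  then have "sorted (map f ys)"
    using least by (auto simp: ys_def sorted_append)
  then have "f (\<sigma> i) \<le> f (\<sigma> j)" if "1 \<le> i" "i \<le> j" "j \<le> n" for i j
    using that sorted_nth_mono[of "map f ys" "i - 1" "j - 1"] len by (simp add: \<sigma>_def)
  moreover have "\<sigma> (Suc k) = ps ! k" if "k < length ps" for k
    using that len by (simp add: \<sigma>_def ys_def nth_append)
  ultimately show thesis
    using perm that by blast
qed

lemma chain_start_le: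
  fixes f :: "nat \<Rightarrow> 'a::linorder"
  assumes "\<forall>i \<in> {k..<n}. f (\<sigma> i) \<le> f (\<sigma> (Suc i))" and "x \<in> \<sigma> ` {k..n}"
  shows "f (\<sigma> k) \<le> f x"
proof -
  obtain i where "i \<in> {k..n}" and "x = \<sigma> i"
    using assms(2) by blast
  then show ?thesis
    using lift_Suc_mono_le_ivl[of "{k..<n}" "f \<circ> \<sigma>" k i] assms(1) by auto
qed

lemma eval_term_eq_least:
  assumes "t \<noteq> {#}" and "a \<in> Var t" and "\<And>x. x \<in> Var t \<Longrightarrow> P a \<le> P x"
  shows "eval_term t P = P a"
  unfolding eval_term_def using assms by (intro Min_eqI) (auto simp: Var_def)

lemma eval_term_attained:
  assumes "t \<noteq> {#}"
  shows "\<exists>a \<in> Var t. eval_term t P = P a \<and> (\<forall>x \<in> Var t. P a \<le> P x)"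
proof -
  have "eval_term t P \<in> P ` Var t"
    using assms by (auto simp: eval_term_def Var_def intro!: Min_in)
  moreover have "eval_term t P \<le> P x" if "x \<in> Var t" for x
    using that by (simp add: eval_term_def Var_def)
  ultimately show ?thesis
    by force
qed

lemma eval_term_eq_iff_least_in_both:
  assumes "t \<noteq> {#}" and "s \<noteq> {#}"
  shows "eval_term t P = eval_term s P \<longleftrightarrow>
    (\<exists>a \<in> Var t. \<exists>b \<in> Var s. \<forall>x \<in> Var t \<union> Var s. P a \<le> P x \<and> P b \<le> P x)"
proof
  assume eq: "eval_term t P = eval_term s P"
  obtain a where a: "a \<in> Var t" "eval_term t P = P a" "\<forall>x \<in> Var t. P a \<le> P x"
    using eval_term_attained[OF assms(1)] by blast
  obtain b where b: "b \<in> Var s" "eval_term s P = P b" "\<forall>x \<in> Var s. P b \<le> P x"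
    using eval_term_attained[OF assms(2)] by blast
  have "P a = P b"
    using eq a(2) b(2) by simp
  then have "\<forall>x \<in> Var t \<union> Var s. P a \<le> P x \<and> P b \<le> P x"
    using a(3) b(3) by auto
  then show "\<exists>a \<in> Var t. \<exists>b \<in> Var s. \<forall>x \<in> Var t \<union> Var s. P a \<le> P x \<and> P b \<le> P x"
    using a(1) b(1) by blast
next
  assume "\<exists>a \<in> Var t. \<exists>b \<in> Var s. \<forall>x \<in> Var t \<union> Var s. P a \<le> P x \<and> P b \<le> P x"
  then obtain a b where "a \<in> Var t" "b \<in> Var s" "\<forall>x \<in> Var t \<union> Var s. P a \<le> P x \<and> P b \<le> P x"
    by blast
  then show "eval_term t P = eval_term s P"
    using eval_term_eq_least[OF assms(1), of a P] eval_term_eq_least[OF assms(2), of b P]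
    by (simp add: order.antisym)
qed

lemma solves_leq_chain_iff:
  assumes "1 \<le> k" \<comment> \<open>otherwise \<open>i \<le> n - 1\<close> admits \<open>i = 0\<close> when \<open>n = 0\<close>\<close>
  shows "(\<forall>(t, s) \<in> {leq_eq (\<sigma> i) (\<sigma> (i + 1)) | i. k \<le> i \<and> i \<le> n - 1}.
            eval_term t P = eval_term s P)
    \<longleftrightarrow> (\<forall>i \<in> {k..<n}. P (\<sigma> i) \<le> P (\<sigma> (Suc i)))"
proof -
  have "{leq_eq (\<sigma> i) (\<sigma> (i + 1)) | i. k \<le> i \<and> i \<le> n - 1} =
      (\<lambda>i. leq_eq (\<sigma> i) (\<sigma> (Suc i))) ` {k..<n}"
    using assms by force
  moreover have "eval_term {#x, y#} P = eval_term {#x#} P \<longleftrightarrow> P x \<le> P y" for x y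
    by (simp add: eval_term_def min_def)
  ultimately show ?thesis
    by (simp add: leq_eq_def)
qed

lemma mem_Y_first_iff:
  "P \<in> Y_first l n \<sigma> \<longleftrightarrow> P \<in> points l n \<and> (\<forall>i \<in> {1..<n}. P (\<sigma> i) \<le> P (\<sigma> (Suc i)))"
  using solves_leq_chain_iff[of 1 \<sigma> n P] by (simp add: Y_first_def V_def)

lemma mem_Y_second_iff:
  "P \<in> Y_second l n \<sigma> \<longleftrightarrow>
    P \<in> points l n \<and> P (\<sigma> 1) = P (\<sigma> 2) \<and> (\<forall>i \<in> {2..<n}. P (\<sigma> i) \<le> P (\<sigma> (Suc i)))"
  using solves_leq_chain_iff[of 2 \<sigma> n P] by (auto simp: Y_second_def V_def var_eq_def eval_term_def)

lemma Y_first_subset_V: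
  assumes "t \<noteq> {#}" and "s \<noteq> {#}" and vars: "Var t \<union> Var s = {1..n}"
    and "first_kind n t s \<sigma>"
  shows "Y_first l n \<sigma> \<subseteq> V l n {(t, s)}"
proof
  fix P assume P: "P \<in> Y_first l n \<sigma>"
  have perm: "\<sigma> permutes {1..n}" and c: "\<sigma> 1 \<in> Var t" "\<sigma> 1 \<in> Var s"
    using assms(4) by (auto simp: first_kind_def)
  have chain: "\<forall>i \<in> {1..<n}. P (\<sigma> i) \<le> P (\<sigma> (Suc i))"
    using P by (simp add: mem_Y_first_iff)
  have "P (\<sigma> 1) \<le> P x" if "x \<in> Var t \<union> Var s" for x
  proof -
    have "x \<in> \<sigma> ` {1..n}"
      using that vars permutes_image[OF perm] by simp
    then show ?thesis
      by (rule chain_start_le[where f = P, OF chain])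
  qed
  then have "eval_term t P = eval_term s P"
    using c eval_term_eq_iff_least_in_both[OF assms(1,2)] by blast
  then show "P \<in> V l n {(t, s)}"
    using P by (simp add: V_def mem_Y_first_iff)
qed

lemma Y_second_subset_V:
  assumes "t \<noteq> {#}" and "s \<noteq> {#}" and vars: "Var t \<union> Var s = {1..n}"
    and "second_kind n t s \<sigma>"
  shows "Y_second l n \<sigma> \<subseteq> V l n {(t, s)}"
proof
  fix P assume P: "P \<in> Y_second l n \<sigma>"
  have perm: "\<sigma> permutes {1..n}" and c: "\<sigma> 2 \<in> Var t" "\<sigma> 1 \<in> Var s"
    using assms(4) by (auto simp: second_kind_def)
  have chain: "\<forall>i \<in> {2..<n}. P (\<sigma> i) \<le> P (\<sigma> (Suc i))" and e12: "P (\<sigma> 1) = P (\<sigma> 2)"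
    using P by (simp_all add: mem_Y_second_iff)
  have least: "P (\<sigma> 2) \<le> P x" if "x \<in> {1..n}" for x
  proof -
    have "x \<in> \<sigma> ` {1..n}"
      using that permutes_image[OF perm] by simp
    then obtain i where i: "i \<in> {1..n}" "x = \<sigma> i"
      by blast
    show ?thesis
    proof (cases "i = 1")
      case True
      then show ?thesis using e12 i(2) by simp
    next
      case False
      then have "x \<in> \<sigma> ` {2..n}" using i by auto
      then show ?thesis
        by (rule chain_start_le[where f = P, OF chain])
    qed
  qed
  have "\<forall>x \<in> Var t \<union> Var s. P (\<sigma> 2) \<le> P x \<and> P (\<sigma> 1) \<le> P x"
    using least e12 vars by simp
  then have "eval_term t P = eval_term s P"
    using c eval_term_eq_iff_least_in_both[OF assms(1,2)] by blast
  then show "P \<in> V l n {(t, s)}"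
    using P by (simp add: V_def mem_Y_second_iff)
qed

lemma solution_mem_Y_first_or_Y_second:
  assumes "t \<noteq> {#}" and "s \<noteq> {#}" and vars: "Var t \<union> Var s = {1..n}"
    and "P \<in> V l n {(t, s)}"
  shows "(\<exists>\<sigma>. first_kind n t s \<sigma> \<and> P \<in> Y_first l n \<sigma>) \<or>
    (\<exists>\<sigma>. second_kind n t s \<sigma> \<and> P \<in> Y_second l n \<sigma>)"
proof -
  have P: "P \<in> points l n" and "eval_term t P = eval_term s P"
    using assms(4) by (auto simp: V_def)
  then obtain a b where a: "a \<in> Var t" and b: "b \<in> Var s"
    and "\<forall>x \<in> Var t \<union> Var s. P a \<le> P x \<and> P b \<le> P x"
    using eval_term_eq_iff_least_in_both[OF assms(1,2)] by blast
  then have least_a: "\<And>x. x \<in> {1..n} \<Longrightarrow> P a \<le> P x"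
    and least_b: "\<And>x. x \<in> {1..n} \<Longrightarrow> P b \<le> P x"
    unfolding vars by simp_all
  have ab: "a \<in> {1..n}" "b \<in> {1..n}"
    using a b vars by auto
  show ?thesis
  proof (cases "\<exists>c \<in> Var t \<inter> Var s. \<forall>x \<in> {1..n}. P c \<le> P x")
    case True
    then obtain c where c: "c \<in> Var t \<inter> Var s" "\<And>x. x \<in> {1..n} \<Longrightarrow> P c \<le> P x"
      by blast
    have "c \<in> {1..n}"
      using c(1) vars by auto
    obtain \<sigma> where perm: "\<sigma> permutes {1..n}"
      and prefix: "\<And>k. k < length [c] \<Longrightarrow> \<sigma> (Suc k) = [c] ! k"
      and ordered: "\<And>i j. 1 \<le> i \<Longrightarrow> i \<le> j \<Longrightarrow> j \<le> n \<Longrightarrow> P (\<sigma> i) \<le> P (\<sigma> j)"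
      by (rule exists_sorting_permutation[of "[c]" n P]) (use \<open>c \<in> {1..n}\<close> c(2) in auto)
    have "first_kind n t s \<sigma>"
      using perm prefix[of 0] c(1) by (simp add: first_kind_def)
    moreover have "P \<in> Y_first l n \<sigma>"
      using ordered P by (simp add: mem_Y_first_iff)
    ultimately show ?thesis
      by blast
  next
    case False
    then have "a \<notin> Var s" "b \<notin> Var t"
      using a b least_a least_b by blast+
    have "a \<noteq> b"
      using a \<open>b \<notin> Var t\<close> by blast
    have "P a = P b"
      using least_a[OF ab(2)] least_b[OF ab(1)] by simp
    obtain \<sigma> where perm: "\<sigma> permutes {1..n}"
      and prefix: "\<And>k. k < length [b, a] \<Longrightarrow> \<sigma> (Suc k) = [b, a] ! k"
      and ordered: "\<And>i j. 1 \<le> i \<Longrightarrow> i \<le> j \<Longrightarrow> j \<le> n \<Longrightarrow> P (\<sigma> i) \<le> P (\<sigma> j)"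
      by (rule exists_sorting_permutation[of "[b, a]" n P])
        (use ab least_a least_b \<open>a \<noteq> b\<close> \<open>P a = P b\<close> in auto)
    have "\<sigma> 1 = b" "\<sigma> 2 = a"
      using prefix[of 0] prefix[of 1] by (simp_all add: numeral_2_eq_2)
    then have "second_kind n t s \<sigma> \<and> P (\<sigma> 1) = P (\<sigma> 2)"
      using perm \<open>a \<notin> Var s\<close> \<open>b \<notin> Var t\<close> a b \<open>P a = P b\<close> by (simp add: second_kind_def)
    moreover have "P \<in> Y_second l n \<sigma>"
      using calculation ordered P by (simp add: mem_Y_second_iff)
    ultimately show ?thesis
      by blast
  qed
qed

theorem lemma2:
  fixes l n :: nat and t s :: sl_term
  assumes "1 \<le> n" and "n \<le> l"
    and "t \<noteq> {#}" and "s \<noteq> {#}"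
    and "Var t \<union> Var s = {1..n}"
  shows "V l n {(t, s)} =
           (\<Union>\<sigma> \<in> {\<sigma>. first_kind n t s \<sigma>}. Y_first l n \<sigma>) \<union>
           (\<Union>\<sigma> \<in> {\<sigma>. second_kind n t s \<sigma>}. Y_second l n \<sigma>)"
proof (rule equalityI)
  show "V l n {(t, s)} \<subseteq> (\<Union>\<sigma> \<in> {\<sigma>. first_kind n t s \<sigma>}. Y_first l n \<sigma>) \<union>
      (\<Union>\<sigma> \<in> {\<sigma>. second_kind n t s \<sigma>}. Y_second l n \<sigma>)"
    using solution_mem_Y_first_or_Y_second[OF assms(3-5)] by blast
  show "(\<Union>\<sigma> \<in> {\<sigma>. first_kind n t s \<sigma>}. Y_first l n \<sigma>) \<union>
      (\<Union>\<sigma> \<in> {\<sigma>. second_kind n t s \<sigma>}. Y_second l n \<sigma>) \<subseteq> V l n {(t, s)}"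
    using Y_first_subset_V[OF assms(3-5)] Y_second_subset_V[OF assms(3-5)]
    by (intro Un_least UN_least) simp_all
qed

end
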